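(* Let $\mathfrak{k}$ be a field, $n\ge 2$, and ${\mathcal A}=(x_{i_1\ldots i_n})_{1\le i_j\le r_j}$ a box-shaped matrix of distinct indeterminates with polynomial ring $\mathfrak{k}[{\mathcal A}]$. Let $F\in\mathfrak{k}[{\mathcal A}]$. If for some entry $x_{i_1\ldots i_n}$ of ${\mathcal A}$ there is a positive integer $\lambda$ with $x_{i_1\ldots i_n}^\lambda F\in I_2({\mathcal A})$, then for every entry $x_{j_1\ldots j_n}$ of ${\mathcal A}$ there is a non-negative integer $\nu$ with $x_{j_1\ldots j_n}^\nu F\in I_2({\mathcal A})$.
   Context: $\mathfrak{k}$ is algebraically closed of characteristic $0$. The $2\times2$ minors of a box-shaped matrix $(a_{i_1\ldots i_n})$ are $a_{i_1\ldots i_l\ldots i_n}a_{j_1\ldots j_l\ldots j_n}-a_{i_1\ldots i_{l-1}j_li_{l+1}\ldots i_n}a_{j_1\ldots j_{l-1}i_lj_{l+1}\ldots j_n}$ for any coordinate $l$ and any two index points; $I_2({\mathcal A})$ is the ideal they generate. *)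

theory Defs
  imports "HOL-Library.Poly_Mapping"
begin

text \<open>Polynomials in indeterminates indexed by index tuples (lists of naturals),
  with coefficients in a field: monomials are finitely supported exponent maps.\<close>

type_synonym 'k mpoly = "(nat list \<Rightarrow>\<^sub>0 nat) \<Rightarrow>\<^sub>0 'k"

definition Var :: "nat list \<Rightarrow> 'k::comm_ring_1 mpoly" where
  "Var i = Poly_Mapping.single (Poly_Mapping.single i 1) 1"

definition box :: "nat list \<Rightarrow> nat list set" where
  "box r = {i. length i = length r \<and> (\<forall>j<length r. 1 \<le> i ! j \<and> i ! j \<le> r ! j)}"

definition poly_ring :: "nat list \<Rightarrow> 'k::comm_ring_1 mpoly set" where
  "poly_ring r = {F :: 'k mpoly. \<forall>m \<in> Poly_Mapping.keys F. Poly_Mapping.keys m \<subseteq> box r}"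

definition ideal_gen :: "nat list \<Rightarrow> 'k::comm_ring_1 mpoly set \<Rightarrow> 'k mpoly set" where
  "ideal_gen r G = {(\<Sum>g\<in>t. c g * g) | t c. finite t \<and> t \<subseteq> G \<and> (\<forall>g\<in>t. c g \<in> poly_ring r)}"

definition minors2 :: "nat list \<Rightarrow> 'k::comm_ring_1 mpoly set" where
  "minors2 r = {Var i * Var j - Var (i[l := j ! l]) * Var (j[l := i ! l]) | i j l.
                 i \<in> box r \<and> j \<in> box r \<and> l < length r}"

definition I2 :: "nat list \<Rightarrow> 'k::comm_ring_1 mpoly set" where
  "I2 r = ideal_gen r (minors2 r)"

end

theory Submission
  imports Defs "HOL-Library.Function_Algebras"
begin

text \<open>Grade monomials by their Segre multidegree: for every coordinate l and value c, count
  the factors of the monomial whose l-th index is c. A 2x2 minor is a difference of two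
  quadratic monomials of the same multidegree, so on I2 the sum of the coefficients belonging
  to any fixed multidegree vanishes. Conversely, two monomials of equal multidegree are
  congruent modulo I2: exchanging single indices between two factors, one coordinate after the
  other, makes a factor of the first monomial appear in the second, and induction on the degree
  finishes. Hence I2 consists exactly of the polynomials all of whose graded coefficient sums
  vanish. Multiplying by a monomial only shifts the grading, so already F lies in I2 and
  nu = 0 works for every entry.\<close>

abbreviation monom :: "(nat list \<Rightarrow>\<^sub>0 nat) \<Rightarrow> 'k::comm_ring_1 mpoly" where
  "monom m \<equiv> Poly_Mapping.single m 1"

abbreviation var_exp :: "nat list \<Rightarrow> (nat list \<Rightarrow>\<^sub>0 nat)" where
  "var_exp i \<equiv> Poly_Mapping.single i 1"

lemma poly_ring_single:
  "Poly_Mapping.keys m \<subseteq> box r \<Longrightarrow> Poly_Mapping.single m c \<in> poly_ring r"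
  unfolding poly_ring_def by simp

lemma poly_ring_one: "1 \<in> poly_ring r"
  unfolding poly_ring_def by simp

lemma poly_ring_uminus: "p \<in> poly_ring r \<Longrightarrow> - p \<in> poly_ring r"
  unfolding poly_ring_def by simp

lemma poly_ring_add: "p \<in> poly_ring r \<Longrightarrow> q \<in> poly_ring r \<Longrightarrow> p + q \<in> poly_ring r"
  unfolding poly_ring_def using keys_add[of p q] by blast

lemma poly_ring_mult:
  assumes "p \<in> poly_ring r" and "q \<in> poly_ring r"
  shows "p * q \<in> poly_ring r"
  unfolding poly_ring_def
proof (intro CollectI ballI)
  fix m assume "m \<in> Poly_Mapping.keys (p * q)"
  then obtain a b where "m = a + b" "a \<in> Poly_Mapping.keys p" "b \<in> Poly_Mapping.keys q"
    using keys_mult[of p q] by blast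
  then show "Poly_Mapping.keys m \<subseteq> box r"
    using assms keys_add[of a b] unfolding poly_ring_def by blast
qed

lemma ideal_genI:
  "finite t \<Longrightarrow> t \<subseteq> G \<Longrightarrow> (\<And>g. g \<in> t \<Longrightarrow> c g \<in> poly_ring r) \<Longrightarrow>
    (\<Sum>g\<in>t. c g * g) \<in> ideal_gen r G"
  unfolding ideal_gen_def by blast

lemma ideal_genE:
  assumes "a \<in> ideal_gen r G"
  obtains t c where "a = (\<Sum>g\<in>t. c g * g)" "finite t" "t \<subseteq> G"
    "\<And>g. g \<in> t \<Longrightarrow> c g \<in> poly_ring r"
  using assms unfolding ideal_gen_def by blast

lemma ideal_gen_0: "0 \<in> ideal_gen r G"
  using ideal_genI[of "{}"] by simp

lemma ideal_gen_generator: "g \<in> G \<Longrightarrow> g \<in> ideal_gen r G"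
  using ideal_genI[of "{g}" G "\<lambda>_. 1"] by (simp add: poly_ring_one)

lemma ideal_gen_add:
  assumes "a \<in> ideal_gen r G" and "b \<in> ideal_gen r G"
  shows "a + b \<in> ideal_gen r G"
proof -
  obtain s c where a: "a = (\<Sum>g\<in>s. c g * g)" "finite s" "s \<subseteq> G"
      "\<And>g. g \<in> s \<Longrightarrow> c g \<in> poly_ring r"
    using assms(1) by (blast elim: ideal_genE)
  obtain t e where b: "b = (\<Sum>g\<in>t. e g * g)" "finite t" "t \<subseteq> G"
      "\<And>g. g \<in> t \<Longrightarrow> e g \<in> poly_ring r"
    using assms(2) by (blast elim: ideal_genE)
  define ce where "ce g = (if g \<in> s then c g else 0) + (if g \<in> t then e g else 0)" for g
  have "(\<Sum>g\<in>s \<union> t. (if g \<in> s then c g else 0) * g) = a"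
    unfolding a(1) using a(2) b(2) by (intro sum.mono_neutral_cong_right) auto
  moreover have "(\<Sum>g\<in>s \<union> t. (if g \<in> t then e g else 0) * g) = b"
    unfolding b(1) using a(2) b(2) by (intro sum.mono_neutral_cong_right) auto
  ultimately have "a + b = (\<Sum>g\<in>s \<union> t. ce g * g)"
    by (simp add: ce_def distrib_right sum.distrib)
  also have "\<dots> \<in> ideal_gen r G"
    using a(2-4) b(2-4)
    by (intro ideal_genI) (auto simp: ce_def poly_ring_add poly_ring_single[of 0])
  finally show ?thesis .
qed

lemma ideal_gen_mult:
  assumes "p \<in> poly_ring r" and "a \<in> ideal_gen r G"
  shows "p * a \<in> ideal_gen r G"
proof -
  obtain s c where a: "a = (\<Sum>g\<in>s. c g * g)" "finite s" "s \<subseteq> G"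
      "\<And>g. g \<in> s \<Longrightarrow> c g \<in> poly_ring r"
    using assms(2) by (blast elim: ideal_genE)
  have "p * a = (\<Sum>g\<in>s. (p * c g) * g)"
    by (simp add: a(1) sum_distrib_left mult.assoc)
  also have "\<dots> \<in> ideal_gen r G"
    using a(2-4) assms(1) by (intro ideal_genI) (simp_all add: poly_ring_mult)
  finally show ?thesis .
qed

lemma ideal_gen_uminus: "a \<in> ideal_gen r G \<Longrightarrow> - a \<in> ideal_gen r G"
  using ideal_gen_mult[OF poly_ring_uminus[OF poly_ring_one]] by fastforce

lemma ideal_gen_diff_commute: "a - b \<in> ideal_gen r G \<longleftrightarrow> b - a \<in> ideal_gen r G"
  using ideal_gen_uminus by fastforce

lemma ideal_gen_diff_trans:
  "a - b \<in> ideal_gen r G \<Longrightarrow> b - c \<in> ideal_gen r G \<Longrightarrow> a - c \<in> ideal_gen r G"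
  using ideal_gen_add by fastforce

lemma ideal_gen_sum:
  "(\<And>x. x \<in> A \<Longrightarrow> f x \<in> ideal_gen r G) \<Longrightarrow> sum f A \<in> ideal_gen r G"
  by (induction A rule: infinite_finite_induct) (simp_all add: ideal_gen_0 ideal_gen_add)

definition multideg :: "(nat list \<Rightarrow>\<^sub>0 nat) \<Rightarrow> nat \<Rightarrow> nat \<Rightarrow> nat" where
  "multideg m l c = (\<Sum>x\<in>Poly_Mapping.keys m. if x ! l = c then Poly_Mapping.lookup m x else 0)"

definition total_deg :: "(nat list \<Rightarrow>\<^sub>0 nat) \<Rightarrow> nat" where
  "total_deg m = (\<Sum>x\<in>Poly_Mapping.keys m. Poly_Mapping.lookup m x)"

lemma multideg_add: "multideg (m + m') = multideg m + multideg m'"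
  by (simp add: fun_eq_iff multideg_def
      setsum_keys_plus_distrib[where f = "\<lambda>x v. if x ! _ = _ then v else 0"])

lemma total_deg_add: "total_deg (m + m') = total_deg m + total_deg m'"
  by (simp add: total_deg_def setsum_keys_plus_distrib[where f = "\<lambda>_ v. v"])

lemma multideg_single: "multideg (Poly_Mapping.single x k) l c = (if x ! l = c then k else 0)"
  by (simp add: multideg_def)

lemma total_deg_single: "total_deg (Poly_Mapping.single x k) = k"
  by (simp add: total_deg_def)

lemma multideg_0 [simp]: "multideg 0 = 0"
  by (simp add: fun_eq_iff multideg_def)

lemma lookup_le_multideg: "Poly_Mapping.lookup m x \<le> multideg m l (x ! l)"
proof (cases "x \<in> Poly_Mapping.keys m")
  case True
  then show ?thesis
    unfolding multideg_def
    using member_le_sum[of x _ "\<lambda>y. if y ! l = x ! l then Poly_Mapping.lookup m y else 0"] by simp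
qed (simp add: in_keys_iff)

lemma ex_key_if_multideg_pos:
  assumes "0 < multideg m l c"
  shows "\<exists>x\<in>Poly_Mapping.keys m. x ! l = c"
proof (rule ccontr)
  assume "\<not> ?thesis"
  then have "multideg m l c = 0"
    unfolding multideg_def by (intro sum.neutral) auto
  with assms show False
    by simp
qed

lemma multideg_exchange:
  assumes "p < length a" and "p < length b"
  shows "multideg (var_exp a + var_exp b) =
    multideg (var_exp (a[p := b ! p]) + var_exp (b[p := a ! p]))"
proof (intro ext)
  fix l c
  show "multideg (var_exp a + var_exp b) l c =
    multideg (var_exp (a[p := b ! p]) + var_exp (b[p := a ! p])) l c"
    using assms by (cases "l = p") (simp_all add: multideg_add multideg_single)
qed

lemma key_split:
  assumes "x \<in> Poly_Mapping.keys m"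
  obtains u where "m = var_exp x + u" and "Poly_Mapping.keys u \<subseteq> Poly_Mapping.keys m"
proof
  show "m = var_exp x + (m - var_exp x)"
    using assms by (intro poly_mapping_eqI)
      (auto simp: lookup_add lookup_minus lookup_single when_def in_keys_iff)
  show "Poly_Mapping.keys (m - var_exp x) \<subseteq> Poly_Mapping.keys m"
    by (auto simp: lookup_minus in_keys_iff)
qed

lemma in_keys_var_exp_add: "x \<in> Poly_Mapping.keys (var_exp x + u)"
  by (simp add: in_keys_iff lookup_add)

lemma monom_add: "(monom (m + m') :: 'k::comm_ring_1 mpoly) = monom m * monom m'"
  by (simp add: mult_single)

lemma Var_power: "(Var i :: 'k::comm_ring_1 mpoly) ^ n = monom (Poly_Mapping.single i n)"
  by (induction n) (simp_all add: Var_def mult_single flip: single_add)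

lemma list_update_nth_in_box:
  assumes "a \<in> box r" and "b \<in> box r"
  shows "a[p := b ! p] \<in> box r"
  unfolding box_def
proof (intro CollectI conjI allI impI)
  fix j assume "j < length r"
  then show "1 \<le> a[p := b ! p] ! j" and "a[p := b ! p] ! j \<le> r ! j"
    using assms by (cases "j = p"; auto simp: box_def nth_list_update)+
qed (use assms in \<open>simp add: box_def\<close>)

lemma monom_mult_diff_in_I2:
  assumes "Poly_Mapping.keys u \<subseteq> box r" and "(monom m - monom m' :: 'k::comm_ring_1 mpoly) \<in> I2 r"
  shows "(monom (u + m) - monom (u + m') :: 'k mpoly) \<in> I2 r"
proof -
  have "(monom (u + m) - monom (u + m') :: 'k mpoly) = monom u * (monom m - monom m')"
    by (simp add: monom_add right_diff_distrib)
  then show ?thesis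
    using ideal_gen_mult[OF poly_ring_single[OF assms(1)]] assms(2) by (simp add: I2_def)
qed

lemma exchange_diff_in_I2:
  assumes "a \<in> box r" and "b \<in> box r" and "p < length r"
  shows "(monom (var_exp a + var_exp b) - monom (var_exp (a[p := b ! p]) + var_exp (b[p := a ! p]))
    :: 'k::comm_ring_1 mpoly) \<in> I2 r"
proof -
  have "(Var a * Var b - Var (a[p := b ! p]) * Var (b[p := a ! p]) :: 'k mpoly) \<in> minors2 r"
    unfolding minors2_def using assms by blast
  then show ?thesis
    by (simp add: I2_def ideal_gen_generator Var_def monom_add)
qed

lemma exists_congruent_monom_prefix:
  assumes k: "k \<in> box r" and m: "Poly_Mapping.keys m \<subseteq> box r"
    and pos: "\<And>l. 0 < multideg m l (k ! l)"
  shows "p \<le> length r \<Longrightarrow> \<exists>m2. Poly_Mapping.keys m2 \<subseteq> box r \<and> multideg m2 = multideg m \<and>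
    (monom m - monom m2 :: 'k::comm_ring_1 mpoly) \<in> I2 r \<and>
    (\<exists>a\<in>Poly_Mapping.keys m2. \<forall>l<p. a ! l = k ! l)"
proof (induction p)
  case 0
  obtain a where "a \<in> Poly_Mapping.keys m"
    using ex_key_if_multideg_pos[OF pos[of 0]] by blast
  then show ?case
    using m by (intro exI[of _ m]) (auto simp: I2_def ideal_gen_0)
next
  case (Suc p)
  then obtain m2 a where m2: "Poly_Mapping.keys m2 \<subseteq> box r" "multideg m2 = multideg m"
      "(monom m - monom m2 :: 'k mpoly) \<in> I2 r"
    and a: "a \<in> Poly_Mapping.keys m2" "\<forall>l<p. a ! l = k ! l"
    by auto
  have p: "p < length r"
    using Suc.prems by simp
  show ?case
  proof (cases "a ! p = k ! p")
    case True
    then show ?thesis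
      using m2 a by (intro exI[of _ m2]) (auto simp: less_Suc_eq)
  next
    case False
    obtain u0 where u0: "m2 = var_exp a + u0" "Poly_Mapping.keys u0 \<subseteq> Poly_Mapping.keys m2"
      using key_split[OF a(1)] .
    have "0 < multideg u0 p (k ! p)"
      using pos[of p] False by (simp add: m2(2)[symmetric] u0(1) multideg_add multideg_single)
    then obtain b where b: "b \<in> Poly_Mapping.keys u0" "b ! p = k ! p"
      using ex_key_if_multideg_pos by blast
    obtain u where u: "u0 = var_exp b + u" "Poly_Mapping.keys u \<subseteq> Poly_Mapping.keys u0"
      using key_split[OF b(1)] .
    define a' b' where "a' = a[p := b ! p]" and "b' = b[p := a ! p]"
    define m3 where "m3 = var_exp a' + (var_exp b' + u)"
    have box: "a \<in> box r" "b \<in> box r" "Poly_Mapping.keys u \<subseteq> box r"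
      using a(1) b(1) u(2) u0(2) m2(1) by blast+
    then have len: "length a = length r" "length b = length r"
      by (simp_all add: box_def)
    have m2_split: "m2 = u + (var_exp a + var_exp b)"
      using u0(1) u(1) by (simp add: ac_simps)
    have m3_split: "m3 = u + (var_exp a' + var_exp b')"
      by (simp add: m3_def ac_simps)
    show ?thesis
    proof (intro exI[of _ m3] conjI bexI)
      have "a' \<in> box r" "b' \<in> box r"
        using box by (simp_all add: a'_def b'_def list_update_nth_in_box)
      then show "Poly_Mapping.keys m3 \<subseteq> box r"
        using box(3) keys_add[of "var_exp a'" "var_exp b' + u"] keys_add[of "var_exp b'" u]
        by (auto simp: m3_def)
      show "multideg m3 = multideg m"
        using multideg_exchange[of p a b] len p
        by (simp add: m2(2)[symmetric] m2_split m3_split multideg_add a'_def b'_def)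
      have "(monom m2 - monom m3 :: 'k mpoly) \<in> I2 r"
        unfolding m2_split m3_split a'_def b'_def
        using box p by (intro monom_mult_diff_in_I2 exchange_diff_in_I2)
      then show "(monom m - monom m3 :: 'k mpoly) \<in> I2 r"
        using ideal_gen_diff_trans m2(3) unfolding I2_def by blast
      show "a' \<in> Poly_Mapping.keys m3"
        unfolding m3_def by (rule in_keys_var_exp_add)
      show "\<forall>l<Suc p. a' ! l = k ! l"
        using a(2) b(2) len p by (auto simp: a'_def nth_list_update less_Suc_eq)
    qed
  qed
qed

lemma monom_diff_in_I2_if_multideg_eq:
  "Poly_Mapping.keys m \<subseteq> box r \<Longrightarrow> Poly_Mapping.keys m' \<subseteq> box r \<Longrightarrow> multideg m = multideg m' \<Longrightarrow>
    (monom m - monom m' :: 'k::comm_ring_1 mpoly) \<in> I2 r"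
proof (induction "total_deg m" arbitrary: m m' rule: less_induct)
  case less
  show ?case
  proof (cases "m = 0")
    case True
    have "Poly_Mapping.lookup m' x = 0" for x
      using lookup_le_multideg[of m' x 0] less.prems(3) True by simp
    then have "m' = 0"
      by (simp add: poly_mapping_eqI)
    then show ?thesis
      using True by (simp add: I2_def ideal_gen_0)
  next
    case False
    then obtain k where k: "k \<in> Poly_Mapping.keys m"
      using keys_eq_empty by blast
    obtain m0 where m0: "m = var_exp k + m0" "Poly_Mapping.keys m0 \<subseteq> Poly_Mapping.keys m"
      using key_split[OF k] .
    have "0 < multideg m' l (k ! l)" for l
      using lookup_le_multideg[of m k l] k less.prems(3) by (simp add: in_keys_iff)
    then obtain m2 a where m2: "Poly_Mapping.keys m2 \<subseteq> box r" "multideg m2 = multideg m'"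
        "(monom m' - monom m2 :: 'k mpoly) \<in> I2 r"
      and a: "a \<in> Poly_Mapping.keys m2" "\<forall>l<length r. a ! l = k ! l"
      using exists_congruent_monom_prefix[of k r m' "length r"] k less.prems(1,2) by blast
    have "a \<in> box r" and "k \<in> box r"
      using a(1) m2(1) k less.prems(1) by blast+
    then have "a = k"
      using a(2) by (intro nth_equalityI) (simp_all add: box_def)
    then obtain m'' where m'': "m2 = var_exp k + m''" "Poly_Mapping.keys m'' \<subseteq> Poly_Mapping.keys m2"
      using key_split a(1) by blast
    have "multideg (var_exp k) + multideg m0 = multideg (var_exp k) + multideg m''"
      using less.prems(3) m2(2) by (simp add: m0(1) m''(1) multideg_add)
    then have "multideg m0 = multideg m''"
      by simp
    moreover have "total_deg m0 < total_deg m"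
      by (simp add: m0(1) total_deg_add total_deg_single)
    ultimately have "(monom m0 - monom m'' :: 'k mpoly) \<in> I2 r"
      using less.hyps m0(2) m''(2) less.prems(1) m2(1) by blast
    then have "(monom m - monom m2 :: 'k mpoly) \<in> I2 r"
      unfolding m0(1) m''(1) using k less.prems(1) by (intro monom_mult_diff_in_I2) auto
    then show ?thesis
      using m2(3) ideal_gen_diff_commute ideal_gen_diff_trans unfolding I2_def by blast
  qed
qed

lemma sum_single_lookup_keys:
  "(\<Sum>m\<in>Poly_Mapping.keys G. Poly_Mapping.single m (Poly_Mapping.lookup G m)) = G"
proof (rule poly_mapping_eqI)
  fix x
  show "Poly_Mapping.lookup
      (\<Sum>m\<in>Poly_Mapping.keys G. Poly_Mapping.single m (Poly_Mapping.lookup G m)) x =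
    Poly_Mapping.lookup G x"
    by (simp add: lookup_sum lookup_single when_def in_keys_iff)
qed

lemma single_sum: "Poly_Mapping.single k (sum f A) = (\<Sum>x\<in>A. Poly_Mapping.single k (f x))"
  by (induction A rule: infinite_finite_induct) (simp_all add: single_add)

definition coeff_sum :: "(nat \<Rightarrow> nat \<Rightarrow> nat) \<Rightarrow> 'k::comm_ring_1 mpoly \<Rightarrow> 'k" where
  "coeff_sum d G = (\<Sum>m\<in>Poly_Mapping.keys G. if multideg m = d then Poly_Mapping.lookup G m else 0)"

lemma coeff_sum_0 [simp]: "coeff_sum d 0 = 0"
  by (simp add: coeff_sum_def)

lemma coeff_sum_add: "coeff_sum d (G + H) = coeff_sum d G + coeff_sum d H"
  by (simp add: coeff_sum_def
      setsum_keys_plus_distrib[where f = "\<lambda>m v. if multideg m = d then v else 0"])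

lemma coeff_sum_diff: "coeff_sum d (G - H) = coeff_sum d G - coeff_sum d H"
proof -
  have "coeff_sum d (- H) = - coeff_sum d H"
    unfolding coeff_sum_def by (simp add: sum_negf[symmetric] if_distrib cong: if_cong)
  then show ?thesis
    using coeff_sum_add[of d G "- H"] by simp
qed

lemma coeff_sum_sum: "coeff_sum d (sum f A) = (\<Sum>x\<in>A. coeff_sum d (f x))"
  by (induction A rule: infinite_finite_induct) (simp_all add: coeff_sum_add)

lemma coeff_sum_single:
  "coeff_sum d (Poly_Mapping.single m a) = (if multideg m = d then a else 0)"
  by (simp add: coeff_sum_def)

lemma coeff_sum_monom_mult:
  "coeff_sum d (monom u * G) =
    (\<Sum>m\<in>Poly_Mapping.keys G. if multideg u + multideg m = d then Poly_Mapping.lookup G m else 0)"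
proof -
  have "monom u * G =
      monom u * (\<Sum>m\<in>Poly_Mapping.keys G. Poly_Mapping.single m (Poly_Mapping.lookup G m))"
    by (simp add: sum_single_lookup_keys)
  also have "\<dots> = (\<Sum>m\<in>Poly_Mapping.keys G. Poly_Mapping.single (u + m) (Poly_Mapping.lookup G m))"
    by (simp add: sum_distrib_left mult_single)
  finally show ?thesis
    by (simp add: coeff_sum_sum coeff_sum_single multideg_add)
qed

lemma coeff_sum_monom_mult_shift: "coeff_sum (multideg u + d) (monom u * G) = coeff_sum d G"
  unfolding coeff_sum_monom_mult by (simp add: coeff_sum_def)

lemma coeff_sum_I2_eq_0:
  fixes G :: "'k::comm_ring_1 mpoly"
  assumes "G \<in> I2 r"
  shows "coeff_sum d G = 0"
proof -
  obtain t c where G: "G = (\<Sum>g\<in>t. c g * g)" and t: "t \<subseteq> minors2 r"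
    using assms unfolding I2_def by (blast elim: ideal_genE)
  have "coeff_sum d (h * g) = 0" if "g \<in> minors2 r" for g h
  proof -
    obtain a b p where ab: "a \<in> box r" "b \<in> box r" and p: "p < length r"
      and g: "g = Var a * Var b - Var (a[p := b ! p]) * Var (b[p := a ! p])"
      using \<open>g \<in> minors2 r\<close> unfolding minors2_def by blast
    let ?u = "var_exp a + var_exp b" and ?v = "var_exp (a[p := b ! p]) + var_exp (b[p := a ! p])"
    have "h * g = monom ?u * h - monom ?v * h"
      unfolding g by (simp add: Var_def mult_single algebra_simps)
    moreover have "multideg ?u = multideg ?v"
      using ab p by (intro multideg_exchange) (simp_all add: box_def)
    ultimately show ?thesis
      by (simp add: coeff_sum_diff coeff_sum_monom_mult)
  qed
  then show ?thesis
    using t by (auto simp: G coeff_sum_sum intro: sum.neutral)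
qed

lemma sum_single_multideg_eq_0:
  assumes "\<And>d. coeff_sum d F = 0"
  shows "(\<Sum>m\<in>Poly_Mapping.keys F.
    Poly_Mapping.single (R (multideg m)) (Poly_Mapping.lookup F m)) = 0"
proof -
  have "(\<Sum>m\<in>{m \<in> Poly_Mapping.keys F. multideg m = d}.
      Poly_Mapping.single (R (multideg m)) (Poly_Mapping.lookup F m)) =
      Poly_Mapping.single (R d) (coeff_sum d F)" for d
    by (simp add: coeff_sum_def single_sum sum.inter_filter[symmetric])
  then show ?thesis
    using sum.group[of "Poly_Mapping.keys F" "multideg ` Poly_Mapping.keys F" multideg
        "\<lambda>m. Poly_Mapping.single (R (multideg m)) (Poly_Mapping.lookup F m)"]
    by (simp add: assms)
qed

lemma in_I2_if_coeff_sums_eq_0: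
  assumes F: "F \<in> poly_ring r" and zero: "\<And>d. coeff_sum d F = 0"
  shows "(F :: 'k::comm_ring_1 mpoly) \<in> I2 r"
proof -
  \<comment> \<open>Choose one monomial of F per multidegree; modulo I2, F equals the sum over d of
    coeff_sum d F times the monomial chosen for d.\<close>
  define R where "R d = (SOME m. m \<in> Poly_Mapping.keys F \<and> multideg m = d)" for d
  have R: "R (multideg m) \<in> Poly_Mapping.keys F \<and> multideg (R (multideg m)) = multideg m"
    if "m \<in> Poly_Mapping.keys F" for m
    using someI[of "\<lambda>m'. m' \<in> Poly_Mapping.keys F \<and> multideg m' = multideg m" m] that
    by (simp add: R_def)
  have keys_box: "Poly_Mapping.keys m \<subseteq> box r" if "m \<in> Poly_Mapping.keys F" for m
    using F that unfolding poly_ring_def by blast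
  have binomial: "(monom m - monom (R (multideg m)) :: 'k mpoly) \<in> ideal_gen r (minors2 r)"
    if "m \<in> Poly_Mapping.keys F" for m
    using monom_diff_in_I2_if_multideg_eq[of m r "R (multideg m)"] R[OF that] keys_box that
    unfolding I2_def by auto
  have "F = (\<Sum>m\<in>Poly_Mapping.keys F. Poly_Mapping.single m (Poly_Mapping.lookup F m))"
    by (simp add: sum_single_lookup_keys)
  also have "\<dots> = (\<Sum>m\<in>Poly_Mapping.keys F.
        Poly_Mapping.single 0 (Poly_Mapping.lookup F m) * (monom m - monom (R (multideg m))))
      + (\<Sum>m\<in>Poly_Mapping.keys F. Poly_Mapping.single (R (multideg m)) (Poly_Mapping.lookup F m))"
    by (simp add: mult_single right_diff_distrib flip: sum.distrib)
  also have "\<dots> = (\<Sum>m\<in>Poly_Mapping.keys F.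
        Poly_Mapping.single 0 (Poly_Mapping.lookup F m) * (monom m - monom (R (multideg m))))"
    by (simp add: sum_single_multideg_eq_0[OF zero])
  also have "\<dots> \<in> I2 r"
    unfolding I2_def using binomial by (intro ideal_gen_sum ideal_gen_mult poly_ring_single) auto
  finally show ?thesis .
qed

lemma I2_monom_mult_cancel:
  assumes "F \<in> poly_ring r" and "monom u * F \<in> I2 r"
  shows "F \<in> I2 r"
proof -
  have "coeff_sum d F = 0" for d
    using coeff_sum_I2_eq_0[OF assms(2), of "multideg u + d"]
    by (simp add: coeff_sum_monom_mult_shift)
  with assms(1) show ?thesis
    by (rule in_I2_if_coeff_sums_eq_0)
qed

theorem lemma1p2:
  fixes r :: "nat list" and F :: "'k::field mpoly" and i :: "nat list"
  assumes "length r \<ge> 2"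
    and "F \<in> poly_ring r"
    and "i \<in> box r"
    and "lam > (0::nat)" and "Var i ^ lam * F \<in> I2 r"
  shows "\<forall>j \<in> box r. \<exists>nu::nat. Var j ^ nu * F \<in> I2 r"
proof -
  have "F \<in> I2 r"
    using assms(2,5) by (intro I2_monom_mult_cancel[of F r "Poly_Mapping.single i lam"])
      (simp_all add: Var_power)
  then show ?thesis
    by (intro ballI exI[of _ 0]) simp
qed

end
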